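(* Let $n\ge 3$ and consider the Markov chain on $\{0,1,\dots,n-1\}$ with $n\times n$ transition probability matrix $\mathbf P=(P_{ij})$ given by: $P_{00}=5/6$, $P_{01}=1/6$; $P_{10}=5/6$, $P_{12}=1/6$; for $2\le i\le n-2$: $P_{i0}=2/3$, $P_{i,i-1}=1/6$, $P_{i,i+1}=1/6$; $P_{n-1,0}=1/3$, $P_{n-1,n-2}=1/6$, $P_{n-1,n-1}=1/2$; all other entries $0$. Then the steady state probability vector $\vec\pi=(\pi_0,\dots,\pi_{n-1})$ (the unique probability vector with $\vec\pi=\vec\pi\mathbf P$) is given by $$\pi_i=\frac{C_{n-1-i}}{\sum_{l=0}^{n-1}C_l},\qquad i=0,1,\dots,n-1.$$
   Context: The Lucas-balancing numbers $C_m$ are defined by $C_0=1$, $C_1=3$, $C_{m+1}=6C_m-C_{m-1}$ (equivalently $C_m=\sqrt{8B_m^2+1}$ where $B_m$ are the balancing numbers $B_0=0,B_1=1,B_{m+1}=6B_m-B_{m-1}$). *)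

theory Defs
  imports Complex_Main
begin

fun lucas_bal :: "nat \<Rightarrow> int" where
  "lucas_bal 0 = 1"
| "lucas_bal (Suc 0) = 3"
| "lucas_bal (Suc (Suc m)) = 6 * lucas_bal (Suc m) - lucas_bal m"

definition trans_P :: "nat \<Rightarrow> nat \<Rightarrow> nat \<Rightarrow> real" where
  "trans_P n i j =
    (if i \<ge> n \<or> j \<ge> n then 0
     else if i = 0 then (if j = 0 then 5/6 else if j = 1 then 1/6 else 0)
     else if i = 1 then (if j = 0 then 5/6 else if j = 2 then 1/6 else 0)
     else if i \<le> n - 2 then
       (if j = 0 then 2/3 else if j = i - 1 then 1/6 else if j = i + 1 then 1/6 else 0)
     else (if j = 0 then 1/3 else if j = n - 2 then 1/6 else if j = n - 1 then 1/2 else 0))"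

definition stationary_prob :: "nat \<Rightarrow> (nat \<Rightarrow> real) \<Rightarrow> bool" where
  "stationary_prob n p \<longleftrightarrow>
     (\<forall>i<n. p i \<ge> 0) \<and> (\<Sum>i<n. p i) = 1 \<and>
     (\<forall>j<n. p j = (\<Sum>i<n. p i * trans_P n i j))"

end

theory Submission
  imports Defs
begin

(* Read backwards, q k = p (n - 1 - k), the balance equations of the columns n - 1, n - 2, ..., 1
   say q 1 = 3 q 0 and q (k + 2) = 6 q (k + 1) - q k: the Lucas-balancing recurrence. Hence they
   hold exactly when p (n - 1 - k) = c C k for some c. The equation of column 0 is redundant
   because P is stochastic, and normalisation forces c = 1 / (C 0 + ... + C (n - 1)). *)

lemma sum_if_eq_remove:
  fixes f g :: "'a \<Rightarrow> 'b::comm_monoid_add"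
  assumes "finite A" "a \<in> A"
  shows "(\<Sum>j\<in>A. if j = a then g j else f j) = g a + (\<Sum>j\<in>A - {a}. f j)"
  using assms by (simp add: sum.remove)

lemma stochastic_balance_eq_redundant:
  fixes Q :: "'s \<Rightarrow> 's \<Rightarrow> 'a::comm_ring_1"
  assumes "finite S"
    and stochastic: "\<And>i. i \<in> S \<Longrightarrow> (\<Sum>j\<in>S. Q i j) = 1"
    and "j0 \<in> S"
    and balance: "\<And>j. j \<in> S \<Longrightarrow> j \<noteq> j0 \<Longrightarrow> p j = (\<Sum>i\<in>S. p i * Q i j)"
  shows "p j0 = (\<Sum>i\<in>S. p i * Q i j0)"
proof -
  let ?pQ = "\<lambda>j. \<Sum>i\<in>S. p i * Q i j"
  have "?pQ j0 + (\<Sum>j\<in>S - {j0}. p j) = ?pQ j0 + (\<Sum>j\<in>S - {j0}. ?pQ j)"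
    using balance by (intro arg_cong[where f = "(+) _"] sum.cong) auto
  also have "\<dots> = (\<Sum>j\<in>S. ?pQ j)"
    using assms by (intro sum.remove[symmetric])
  also have "\<dots> = (\<Sum>i\<in>S. p i * (\<Sum>j\<in>S. Q i j))"
    by (subst sum.swap) (simp add: sum_distrib_left)
  also have "\<dots> = (\<Sum>j\<in>S. p j)"
    using stochastic by simp
  also have "\<dots> = p j0 + (\<Sum>j\<in>S - {j0}. p j)"
    using assms by (intro sum.remove)
  finally show ?thesis by simp
qed

lemma all_less_reflect_iff: "(\<forall>k<n. P k (n - 1 - k)) \<longleftrightarrow> (\<forall>i<(n::nat). P (n - 1 - i) i)"
proof -
  have reflect: "\<forall>i<n. R (n - 1 - i) i" if "\<forall>k<n. R k (n - 1 - k)" for R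
  proof (intro allI impI)
    fix i assume "i < n"
    then have "n - 1 - i < n" "n - 1 - (n - 1 - i) = i" by auto
    then show "R (n - 1 - i) i" using that by metis
  qed
  show ?thesis
    using reflect[of P] reflect[of "\<lambda>i k. P k i"] by blast
qed

lemma prob_vector_proportional_iff:
  fixes p w :: "nat \<Rightarrow> real"
  assumes w_nonneg: "\<And>i. i < n \<Longrightarrow> 0 \<le> w i" and sum_w_pos: "0 < (\<Sum>i<n. w i)"
  shows "((\<forall>i<n. 0 \<le> p i) \<and> (\<Sum>i<n. p i) = 1 \<and> (\<exists>c. \<forall>i<n. p i = c * w i)) \<longleftrightarrow>
         (\<forall>i<n. p i = w i / (\<Sum>l<n. w l))"
proof
  assume "(\<forall>i<n. 0 \<le> p i) \<and> (\<Sum>i<n. p i) = 1 \<and> (\<exists>c. \<forall>i<n. p i = c * w i)"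
  then obtain c where sum_p: "(\<Sum>i<n. p i) = 1" and c: "\<forall>i<n. p i = c * w i" by blast
  have "c * (\<Sum>i<n. w i) = 1"
    using sum_p c by (simp add: sum_distrib_left)
  then show "\<forall>i<n. p i = w i / (\<Sum>l<n. w l)"
    using c sum_w_pos by (simp add: field_simps)
next
  assume normalized: "\<forall>i<n. p i = w i / (\<Sum>l<n. w l)"
  then have "(\<Sum>i<n. p i) = (\<Sum>i<n. w i) / (\<Sum>l<n. w l)"
    by (simp add: sum_divide_distrib[symmetric])
  with normalized w_nonneg sum_w_pos
  show "(\<forall>i<n. 0 \<le> p i) \<and> (\<Sum>i<n. p i) = 1 \<and> (\<exists>c. \<forall>i<n. p i = c * w i)"
    by (auto intro!: exI[of _ "1 / (\<Sum>l<n. w l)"])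
qed

lemma lucas_bal_pos: "lucas_bal m > 0"
proof -
  have "0 < lucas_bal m \<and> lucas_bal m \<le> lucas_bal (Suc m)"
    by (induction m rule: lucas_bal.induct) auto
  then show ?thesis ..
qed

lemma lucas_bal_recurrence_iff:
  fixes q :: "nat \<Rightarrow> real"
  assumes "1 < m"
  shows "(q 1 = 3 * q 0 \<and> (\<forall>k. k + 2 < m \<longrightarrow> q (k + 2) = 6 * q (k + 1) - q k)) \<longleftrightarrow>
         (\<exists>c. \<forall>k<m. q k = c * real_of_int (lucas_bal k))"
proof
  assume recurrence: "q 1 = 3 * q 0 \<and> (\<forall>k. k + 2 < m \<longrightarrow> q (k + 2) = 6 * q (k + 1) - q k)"
  have "k < m \<Longrightarrow> q k = q 0 * real_of_int (lucas_bal k)" for k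
  proof (induction k rule: lucas_bal.induct)
    case (3 k)
    then have "q (k + 2) = 6 * q (k + 1) - q k" using recurrence by simp
    with 3 show ?case by (simp add: algebra_simps)
  qed (use recurrence in simp_all)
  then show "\<exists>c. \<forall>k<m. q k = c * real_of_int (lucas_bal k)" by blast
qed (use assms in \<open>auto simp: algebra_simps\<close>)

lemma trans_P_row_cases:
  assumes "n \<ge> 3" "i < (n::nat)"
  obtains "i = 0" | "i = 1" | "2 \<le> i" "i \<le> n - 2" | m where "n = m + 3" "i = m + 2"
proof (cases "i \<le> n - 2")
  case False
  with assms have "n = (n - 3) + 3" "i = (n - 3) + 2" by auto
  then show thesis by (rule that(4))
qed (use that in linarith)

lemma trans_P_row_sum:
  assumes "n \<ge> 3" "i < n"
  shows "(\<Sum>j<n. trans_P n i j) = 1"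
  by (rule trans_P_row_cases[OF assms]) (use assms in \<open>auto simp: trans_P_def sum_if_eq_remove\<close>)

lemma trans_P_interior_column:
  assumes "n \<ge> 3" "1 \<le> j" "j \<le> n - 2" "i < n"
  shows "trans_P n i j = (if i = j - 1 then 1/6 else if i = j + 1 then 1/6 else 0)"
  by (rule trans_P_row_cases[OF assms(1,4)]) (use assms in \<open>auto simp: trans_P_def\<close>)

lemma trans_P_last_column:
  assumes "n \<ge> 3" "i < n"
  shows "trans_P n i (n - 1) = (if i = n - 2 then 1/6 else if i = n - 1 then 1/2 else 0)"
  by (rule trans_P_row_cases[OF assms]) (use assms in \<open>auto simp: trans_P_def\<close>)

lemma trans_P_left_mult_interior:
  assumes "n \<ge> 3" "1 \<le> j" "j \<le> n - 2"
  shows "(\<Sum>i<n. p i * trans_P n i j) = (p (j - 1) + p (j + 1)) / 6"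
proof -
  have "(\<Sum>i<n. p i * trans_P n i j) =
        (\<Sum>i<n. if i = j - 1 then p i / 6 else if i = j + 1 then p i / 6 else 0)"
    using assms by (intro sum.cong) (simp_all add: trans_P_interior_column)
  also have "\<dots> = (p (j - 1) + p (j + 1)) / 6"
    using assms by (auto simp: sum_if_eq_remove)
  finally show ?thesis .
qed

lemma trans_P_left_mult_last:
  assumes "n \<ge> 3"
  shows "(\<Sum>i<n. p i * trans_P n i (n - 1)) = p (n - 2) / 6 + p (n - 1) / 2"
proof -
  have "(\<Sum>i<n. p i * trans_P n i (n - 1)) =
        (\<Sum>i<n. if i = n - 2 then p i / 6 else if i = n - 1 then p i / 2 else 0)"
    using trans_P_last_column[OF assms] by (intro sum.cong) simp_all
  also have "\<dots> = p (n - 2) / 6 + p (n - 1) / 2"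
    using assms by (auto simp: sum_if_eq_remove)
  finally show ?thesis .
qed

lemma stationary_prob_iff_positive_column_balance:
  assumes "n \<ge> 3"
  shows "stationary_prob n p \<longleftrightarrow> (\<forall>i<n. 0 \<le> p i) \<and> (\<Sum>i<n. p i) = 1 \<and>
           (\<forall>j. 1 \<le> j \<longrightarrow> j < n \<longrightarrow> p j = (\<Sum>i<n. p i * trans_P n i j))"
proof -
  have "(\<forall>j<n. p j = (\<Sum>i<n. p i * trans_P n i j)) \<longleftrightarrow>
        (\<forall>j. 1 \<le> j \<longrightarrow> j < n \<longrightarrow> p j = (\<Sum>i<n. p i * trans_P n i j))"
  proof
    assume balance: "\<forall>j. 1 \<le> j \<longrightarrow> j < n \<longrightarrow> p j = (\<Sum>i<n. p i * trans_P n i j)"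
    have "p 0 = (\<Sum>i<n. p i * trans_P n i 0)"
    proof (rule stochastic_balance_eq_redundant[OF _ trans_P_row_sum[OF assms]])
      show "0 \<in> {..<n}" using assms by simp
      fix j assume "j \<in> {..<n}" "j \<noteq> 0"
      then show "p j = (\<Sum>i<n. p i * trans_P n i j)" using balance by simp
    qed simp_all
    with balance show "\<forall>j<n. p j = (\<Sum>i<n. p i * trans_P n i j)"
      by (metis less_one not_less)
  qed simp
  then show ?thesis unfolding stationary_prob_def by blast
qed

lemma interior_balance_iff_reversed_recurrence:
  fixes p :: "nat \<Rightarrow> real"
  assumes "n \<ge> 3"
  shows "(\<forall>j. 1 \<le> j \<longrightarrow> j \<le> n - 2 \<longrightarrow> p j = (p (j - 1) + p (j + 1)) / 6) \<longleftrightarrow>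
         (\<forall>k. k + 2 < n \<longrightarrow> p (n - 1 - (k + 2)) = 6 * p (n - 1 - (k + 1)) - p (n - 1 - k))"
proof (intro iffI allI impI)
  fix k assume interior: "\<forall>j. 1 \<le> j \<longrightarrow> j \<le> n - 2 \<longrightarrow> p j = (p (j - 1) + p (j + 1)) / 6"
    and "k + 2 < n"
  then have "p (n - 2 - k) = (p (n - 2 - k - 1) + p (n - 2 - k + 1)) / 6"
    by (intro interior[rule_format]) auto
  moreover have "n - 2 - k - 1 = n - 1 - (k + 2)" "n - 2 - k + 1 = n - 1 - k"
    "n - 2 - k = n - 1 - (k + 1)"
    using \<open>k + 2 < n\<close> by auto
  ultimately have "p (n - 1 - (k + 1)) = (p (n - 1 - (k + 2)) + p (n - 1 - k)) / 6"
    by (simp only:)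
  then show "p (n - 1 - (k + 2)) = 6 * p (n - 1 - (k + 1)) - p (n - 1 - k)"
    by (simp add: field_simps)
next
  fix j
  assume recurrence:
      "\<forall>k. k + 2 < n \<longrightarrow> p (n - 1 - (k + 2)) = 6 * p (n - 1 - (k + 1)) - p (n - 1 - k)"
    and "1 \<le> j" "j \<le> n - 2"
  then have "p (n - 1 - (n - 2 - j + 2)) =
             6 * p (n - 1 - (n - 2 - j + 1)) - p (n - 1 - (n - 2 - j))"
    by (intro recurrence[rule_format]) auto
  moreover have "n - 1 - (n - 2 - j + 2) = j - 1" "n - 1 - (n - 2 - j + 1) = j"
    "n - 1 - (n - 2 - j) = j + 1"
    using \<open>1 \<le> j\<close> \<open>j \<le> n - 2\<close> assms by auto
  ultimately have "p (j - 1) = 6 * p j - p (j + 1)"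
    by (simp only:)
  then show "p j = (p (j - 1) + p (j + 1)) / 6"
    by (simp add: field_simps)
qed

lemma positive_column_balance_iff_lucas_bal:
  fixes p :: "nat \<Rightarrow> real"
  assumes "n \<ge> 3"
  shows "(\<forall>j. 1 \<le> j \<longrightarrow> j < n \<longrightarrow> p j = (\<Sum>i<n. p i * trans_P n i j)) \<longleftrightarrow>
         (\<exists>c. \<forall>i<n. p i = c * real_of_int (lucas_bal (n - 1 - i)))"
proof -
  have "(\<forall>j. 1 \<le> j \<longrightarrow> j < n \<longrightarrow> p j = (\<Sum>i<n. p i * trans_P n i j)) \<longleftrightarrow>
        p (n - 1) = p (n - 2) / 6 + p (n - 1) / 2 \<and>
        (\<forall>j. 1 \<le> j \<longrightarrow> j \<le> n - 2 \<longrightarrow> p j = (p (j - 1) + p (j + 1)) / 6)"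
  proof (intro iffI conjI allI impI)
    assume balance: "\<forall>j. 1 \<le> j \<longrightarrow> j < n \<longrightarrow> p j = (\<Sum>i<n. p i * trans_P n i j)"
    show "p (n - 1) = p (n - 2) / 6 + p (n - 1) / 2"
      using balance[rule_format, of "n - 1"] trans_P_left_mult_last[OF assms] assms by simp
    fix j assume "1 \<le> j" "j \<le> n - 2"
    then show "p j = (p (j - 1) + p (j + 1)) / 6"
      using balance[rule_format, of j] trans_P_left_mult_interior[OF assms] assms by simp
  next
    fix j
    assume equations: "p (n - 1) = p (n - 2) / 6 + p (n - 1) / 2 \<and>
        (\<forall>j. 1 \<le> j \<longrightarrow> j \<le> n - 2 \<longrightarrow> p j = (p (j - 1) + p (j + 1)) / 6)"
      and "1 \<le> j" "j < n"
    show "p j = (\<Sum>i<n. p i * trans_P n i j)"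
    proof (cases "j = n - 1")
      case True
      then show ?thesis using equations trans_P_left_mult_last[OF assms] by simp
    next
      case False
      with \<open>j < n\<close> have "j \<le> n - 2" by linarith
      with equations \<open>1 \<le> j\<close> have "p j = (p (j - 1) + p (j + 1)) / 6" by blast
      also have "\<dots> = (\<Sum>i<n. p i * trans_P n i j)"
        by (rule trans_P_left_mult_interior[OF assms \<open>1 \<le> j\<close> \<open>j \<le> n - 2\<close>, symmetric])
      finally show ?thesis .
    qed
  qed
  also have "\<dots> \<longleftrightarrow> p (n - 2) = 3 * p (n - 1) \<and>
      (\<forall>k. k + 2 < n \<longrightarrow> p (n - 1 - (k + 2)) = 6 * p (n - 1 - (k + 1)) - p (n - 1 - k))"
  proof -
    have "x = y / 6 + x / 2 \<longleftrightarrow> y = 3 * x" for x y :: real by linarith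
    then show ?thesis by (simp only: interior_balance_iff_reversed_recurrence[OF assms])
  qed
  also have "\<dots> \<longleftrightarrow> (\<exists>c. \<forall>k<n. p (n - 1 - k) = c * real_of_int (lucas_bal k))"
  proof -
    have "1 < n" "n - 1 - 1 = n - 2" "n - 1 - 0 = n - 1" using assms by auto
    then show ?thesis using lucas_bal_recurrence_iff[of n "\<lambda>k. p (n - 1 - k)"] by (simp only:)
  qed
  also have "\<dots> \<longleftrightarrow> (\<exists>c. \<forall>i<n. p i = c * real_of_int (lucas_bal (n - 1 - i)))"
    by (simp only: all_less_reflect_iff[of n "\<lambda>k i. p i = _ * real_of_int (lucas_bal k)"])
  finally show ?thesis .
qed

theorem theorem3p1:
  fixes n :: nat
  assumes "n \<ge> 3"
  shows "\<forall>p. stationary_prob n p \<longleftrightarrow>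
           (\<forall>i<n. p i = real_of_int (lucas_bal (n - 1 - i)) / (\<Sum>l<n. real_of_int (lucas_bal l)))"
proof
  fix p :: "nat \<Rightarrow> real"
  define w where "w i = real_of_int (lucas_bal (n - 1 - i))" for i
  have w_pos: "w i > 0" for i
    using lucas_bal_pos by (simp add: w_def)
  have sum_w: "(\<Sum>i<n. w i) = (\<Sum>l<n. real_of_int (lucas_bal l))"
    using sum.nat_diff_reindex[of "\<lambda>l. real_of_int (lucas_bal l)" n] by (simp add: w_def)
  have "(\<Sum>i<n. w i) > 0"
    using w_pos assms by (intro sum_pos) (auto simp: lessThan_empty_iff)
  have "stationary_prob n p \<longleftrightarrow>
      (\<forall>i<n. 0 \<le> p i) \<and> (\<Sum>i<n. p i) = 1 \<and> (\<exists>c. \<forall>i<n. p i = c * w i)"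
    unfolding w_def
    by (simp only: stationary_prob_iff_positive_column_balance[OF assms]
        positive_column_balance_iff_lucas_bal[OF assms])
  also have "\<dots> \<longleftrightarrow> (\<forall>i<n. p i = w i / (\<Sum>l<n. w l))"
    using w_pos \<open>(\<Sum>i<n. w i) > 0\<close> by (intro prob_vector_proportional_iff) (auto intro: less_imp_le)
  finally show "stationary_prob n p \<longleftrightarrow>
      (\<forall>i<n. p i = real_of_int (lucas_bal (n - 1 - i)) / (\<Sum>l<n. real_of_int (lucas_bal l)))"
    using sum_w by (simp add: w_def)
qed

end
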